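(* Let $m,n$ be positive integers. For all $\sigma\in\mathfrak S_{mn}$ and all partitions $\lambda$ with $\ell(\lambda)\le mn$, $l(\lambda;\sigma)\succeq l(\lambda;Id)$.
   Context: $\lambda=(\lambda_1,\dots,\lambda_{mn})$ padded with zeros; $\mathbf u\succeq\mathbf v$ means $u_i\ge v_i$ for all $i$; $Id$ is the identity permutation. Variables $s_0,\dots,s_{m-1},t_1,\dots,t_{n-2}$; $T=t_1\cdots t_{n-2}$; $x_i=s_1\cdots s_iT^i$ ($1\le i\le m-1$), $y_j=s_0s_1\cdots s_{m-1}T^{m-1}t_1\cdots t_{j-1}$ ($1\le j\le n-1$); $e(M)\in\mathbb Z^{m+n-2}$ is the exponent vector of a monomial $M$ (coordinates $s_0,\dots,s_{m-1},t_1,\dots,t_{n-2}$). Let $(z_1,\dots,z_{mn})=(1,x_1,\dots,x_{m-1},y_1,\dots,y_{n-1},x_1y_1,\dots,x_1y_{n-1},x_2y_1,\dots,x_{m-1}y_{n-1})$ and, for $\sigma\in\mathfrak S_{mn}$, $l(\lambda;\sigma)=e\big(\prod_{i=1}^{mn}z_i^{\lambda_{\sigma(i)}+mn-\sigma(i)}\big)$ (the concatenation of the paper's $l_s(\lambda;\sigma)$ and $l_t(\lambda;\sigma)$). *)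

theory Defs
  imports "HOL-Combinatorics.Permutations"
begin

text \<open>Variables s_0,...,s_(m-1) and t_1,...,t_(n-2).
  A monomial is represented by its exponent function on variables.\<close>

datatype var = S nat | Tv nat

type_synonym mono = "var \<Rightarrow> nat"

definition mone :: mono where "mone = (\<lambda>_. 0)"
definition mmul :: "mono \<Rightarrow> mono \<Rightarrow> mono" where "mmul a b = (\<lambda>v. a v + b v)"
definition mpow :: "mono \<Rightarrow> nat \<Rightarrow> mono" where "mpow a k = (\<lambda>v. k * a v)"
definition mprod :: "('i \<Rightarrow> mono) \<Rightarrow> 'i set \<Rightarrow> mono" where
  "mprod f A = (\<lambda>v. \<Sum>a\<in>A. f a v)"

definition svar :: "nat \<Rightarrow> mono" where "svar i = (\<lambda>v. if v = S i then 1 else 0)"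
definition tvar :: "nat \<Rightarrow> mono" where "tvar j = (\<lambda>v. if v = Tv j then 1 else 0)"

text \<open>The coordinates of the exponent vector e(M): s_0..s_(m-1), t_1..t_(n-2).\<close>
definition vars :: "nat \<Rightarrow> nat \<Rightarrow> var set" where
  "vars m n = S ` {0..<m} \<union> Tv ` {1..n-2}"

definition Tmono :: "nat \<Rightarrow> mono" where "Tmono n = mprod tvar {1..n-2}"

definition xmono :: "nat \<Rightarrow> nat \<Rightarrow> nat \<Rightarrow> mono" where
  "xmono m n i = mmul (mprod svar {1..i}) (mpow (Tmono n) i)"

definition ymono :: "nat \<Rightarrow> nat \<Rightarrow> nat \<Rightarrow> mono" where
  "ymono m n j = mmul (mprod svar {0..m-1}) (mmul (mpow (Tmono n) (m-1)) (mprod tvar {1..j-1}))"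

text \<open>(z_1,...,z_mn) = (1, x_1..x_(m-1), y_1..y_(n-1), x_1y_1,...,x_1y_(n-1), x_2y_1, ..., x_(m-1)y_(n-1))\<close>
definition zlist :: "nat \<Rightarrow> nat \<Rightarrow> mono list" where
  "zlist m n = [mone] @ map (xmono m n) [1..<m] @ map (ymono m n) [1..<n]
     @ concat (map (\<lambda>i. map (\<lambda>j. mmul (xmono m n i) (ymono m n j)) [1..<n]) [1..<m])"

definition zmono :: "nat \<Rightarrow> nat \<Rightarrow> nat \<Rightarrow> mono" where
  "zmono m n k = zlist m n ! (k - 1)"

definition lvec :: "nat \<Rightarrow> nat \<Rightarrow> (nat \<Rightarrow> nat) \<Rightarrow> (nat \<Rightarrow> nat) \<Rightarrow> mono" where
  "lvec m n lam \<sigma> = mprod (\<lambda>i. mpow (zmono m n i) (lam (\<sigma> i) + m * n - \<sigma> i)) {1..m*n}"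

definition succeq :: "nat \<Rightarrow> nat \<Rightarrow> mono \<Rightarrow> mono \<Rightarrow> bool" where
  "succeq m n u v \<longleftrightarrow> (\<forall>w\<in>vars m n. v w \<le> u w)"

text \<open>lambda = (lambda_1,...,lambda_mn) a partition with at most mn parts, padded with zeros.\<close>
definition is_partition_upto :: "nat \<Rightarrow> (nat \<Rightarrow> nat) \<Rightarrow> bool" where
  "is_partition_upto N lam \<longleftrightarrow> (\<forall>i j. 1 \<le> i \<longrightarrow> i \<le> j \<longrightarrow> j \<le> N \<longrightarrow> lam j \<le> lam i)"

end

theory Submission
  imports Defs
begin

text \<open>Fix a coordinate w of the exponent vector. Its value on l(\<lambda>;\<sigma>) is
  \<Sum>i. a(\<sigma> i) * c(i), where a(k) = \<lambda>(k) + mn - k decreases in k because \<lambda> is a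
  partition, and c(i) is the exponent of w in z(i). The monomials z(i) are listed so that
  each such exponent c(i) weakly increases with i, so by the rearrangement inequality the
  identity permutation minimises every coordinate.\<close>

lemma rearrangement_inequality_pair:
  fixes x y u v :: "'a::{comm_semiring_1, canonically_ordered_monoid_add}"
  assumes "x \<le> y" "u \<le> v"
  shows "x * v + y * u \<le> x * u + y * v"
proof -
  obtain d e where "y = x + d" "v = u + e"
    using assms by (auto simp: le_iff_add)
  then have "x * u + y * v = (x * v + y * u) + d * e"
    by (simp add: algebra_simps)
  then show ?thesis
    unfolding le_iff_add by (rule exI)
qed

lemma sum_le_sum_agree_outside:
  fixes f g :: "'i \<Rightarrow> 'a::ordered_comm_monoid_add"
  assumes "finite A" "B \<subseteq> A" "\<And>i. i \<in> A - B \<Longrightarrow> f i = g i" "sum f B \<le> sum g B"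
  shows "sum f A \<le> sum g A"
proof -
  have "sum f A = sum f (A - B) + sum f B" by (rule sum.subset_diff[OF assms(2,1)])
  also have "\<dots> = sum g (A - B) + sum f B" using assms(3) by simp
  also have "\<dots> \<le> sum g (A - B) + sum g B" using assms(4) by (rule add_left_mono)
  also have "\<dots> = sum g A" by (rule sum.subset_diff[OF assms(2,1), symmetric])
  finally show ?thesis .
qed

lemma sorted_concatI:
  assumes "\<And>xs. xs \<in> set xss \<Longrightarrow> sorted xs"
    and "sorted_wrt (\<lambda>xs ys. \<forall>x\<in>set xs. \<forall>y\<in>set ys. x \<le> y) xss"
  shows "sorted (concat xss)"
  using assms by (induction xss) (auto simp: sorted_append)

lemma sorted_map_upt: "mono_on {a..<b} f \<Longrightarrow> sorted (map f [a..<b])"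
  by (auto simp: sorted_iff_nth_mono intro: mono_onD)

lemma sorted_grid_enumeration:
  fixes X Y :: "nat \<Rightarrow> nat"
  assumes X_mono: "mono_on {1..<m} X" and Y_mono: "mono_on {1..<n} Y"
    and X_le_Y: "\<And>i j. i \<in> {1..<m} \<Longrightarrow> j \<in> {1..<n} \<Longrightarrow> X i \<le> Y j"
    and Y_le_grid: "\<And>i j j'. i \<in> {1..<m} \<Longrightarrow> j \<in> {1..<n} \<Longrightarrow> j' \<in> {1..<n} \<Longrightarrow> Y j \<le> X i + Y j'"
    and rows_le: "\<And>i i' j j'. 1 \<le> i \<Longrightarrow> i < i' \<Longrightarrow> i' < m \<Longrightarrow> j \<in> {1..<n} \<Longrightarrow> j' \<in> {1..<n} \<Longrightarrow>
      X i + Y j \<le> X i' + Y j'"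
  shows "sorted ([0] @ map X [1..<m] @ map Y [1..<n]
    @ concat (map (\<lambda>i. map (\<lambda>j. X i + Y j) [1..<n]) [1..<m]))"
proof -
  define G where "G = concat (map (\<lambda>i. map (\<lambda>j. X i + Y j) [1..<n]) [1..<m])"
  have G_elem: "\<exists>i\<in>{1..<m}. \<exists>j\<in>{1..<n}. z = X i + Y j" if "z \<in> set G" for z
    using that unfolding G_def by auto
  have "sorted G"
    unfolding G_def
  proof (rule sorted_concatI)
    show "sorted xs" if "xs \<in> set (map (\<lambda>i. map (\<lambda>j. X i + Y j) [1..<n]) [1..<m])" for xs
      using that Y_mono by (auto intro!: sorted_map_upt simp: mono_on_def)
    show "sorted_wrt (\<lambda>xs ys. \<forall>x\<in>set xs. \<forall>y\<in>set ys. x \<le> y) (map (\<lambda>i. map (\<lambda>j. X i + Y j) [1..<n]) [1..<m])"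
      using rows_le by (auto simp: sorted_wrt_map sorted_wrt_iff_nth_less)
  qed
  moreover have Y_le_G: "Y j \<le> z" if "j \<in> {1..<n}" "z \<in> set G" for j z
    using G_elem[OF that(2)] Y_le_grid that(1) by blast
  moreover have "X i \<le> z" if i: "i \<in> {1..<m}" and z: "z \<in> set (map Y [1..<n] @ G)" for i z
  proof -
    have "n > 1"
      using z G_elem by fastforce
    then have "Y 1 \<le> z"
      using z Y_mono Y_le_G by (auto intro: mono_onD)
    then show ?thesis
      using X_le_Y[OF i] \<open>n > 1\<close> by (meson atLeastLessThan_iff le_trans order_refl)
  qed
  ultimately show ?thesis
    using sorted_map_upt[OF X_mono] sorted_map_upt[OF Y_mono]
    unfolding G_def[symmetric] sorted_append by auto
qed

theorem rearrangement_inequality: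
  fixes a c :: "nat \<Rightarrow> 'a::{comm_semiring_1, canonically_ordered_monoid_add}"
  assumes "\<sigma> permutes {1..N}" and "antimono_on {1..N} a" and "mono_on {1..N} c"
  shows "(\<Sum>i=1..N. a i * c i) \<le> (\<Sum>i=1..N. a (\<sigma> i) * c i)"
  using assms
proof (induction N arbitrary: \<sigma>)
  case 0
  then show ?case by simp
next
  case (Suc N)
  txt \<open>\<tau> fixes the last index, so the induction hypothesis applies to it, and
    \<tau> differs from \<sigma> only at k and Suc N, where the two-term inequality compares them.\<close>
  define k where "k = inv \<sigma> (Suc N)"
  define \<tau> where "\<tau> = \<sigma> \<circ> transpose k (Suc N)"
  have k: "k \<in> {1..Suc N}" "\<sigma> k = Suc N"
    unfolding k_def using permutes_in_image[OF permutes_inv[OF Suc.prems(1)], of "Suc N"]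
    by (simp_all add: permutes_inverses(1)[OF Suc.prems(1)])
  have "\<tau> permutes {1..Suc N}"
    unfolding \<tau>_def using Suc.prems(1) k(1) by (intro permutes_compose permutes_swap_id) auto
  moreover have \<tau>_last: "\<tau> (Suc N) = Suc N"
    unfolding \<tau>_def using k(2) by simp
  ultimately have "\<tau> permutes {1..N}"
    by (auto intro: permutes_superset simp: le_Suc_eq)
  moreover have "antimono_on {1..N} a" "mono_on {1..N} c"
    using Suc.prems(2,3) by (auto elim!: monotone_on_subset)
  ultimately have "(\<Sum>i=1..N. a i * c i) \<le> (\<Sum>i=1..N. a (\<tau> i) * c i)"
    by (rule Suc.IH)
  then have "(\<Sum>i=1..Suc N. a i * c i) \<le> (\<Sum>i=1..Suc N. a (\<tau> i) * c i)"
    using \<tau>_last by (simp add: add_right_mono)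
  also have "\<dots> \<le> (\<Sum>i=1..Suc N. a (\<sigma> i) * c i)"
  proof (rule sum_le_sum_agree_outside)
    show "a (\<tau> i) * c i = a (\<sigma> i) * c i" if "i \<in> {1..Suc N} - {k, Suc N}" for i
      using that unfolding \<tau>_def by simp
    have "\<sigma> (Suc N) \<in> {1..Suc N}"
      using permutes_in_image[OF Suc.prems(1)] by simp
    then have "a (Suc N) \<le> a (\<sigma> (Suc N))" "c k \<le> c (Suc N)"
      using Suc.prems(2,3) k(1) by (auto intro: monotone_onD)
    then show "(\<Sum>i\<in>{k, Suc N}. a (\<tau> i) * c i) \<le> (\<Sum>i\<in>{k, Suc N}. a (\<sigma> i) * c i)"
      using k(2) \<tau>_last rearrangement_inequality_pair
      by (cases "k = Suc N") (auto simp: \<tau>_def add.commute)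
  qed (use k(1) in auto)
  finally show ?case .
qed

lemma xmono_apply:
  "xmono m n i (S k) = (if 1 \<le> k \<and> k \<le> i then 1 else 0)"
  "xmono m n i (Tv l) = (if 1 \<le> l \<and> l \<le> n - 2 then i else 0)"
  by (simp_all add: xmono_def mmul_def mprod_def svar_def mpow_def Tmono_def tvar_def)

lemma ymono_apply:
  "ymono m n j (S k) = (if k \<le> m - 1 then 1 else 0)"
  "ymono m n j (Tv l) = (if 1 \<le> l \<and> l \<le> n - 2 then m - 1 else 0) + (if 1 \<le> l \<and> l < j then 1 else 0)"
  by (auto simp add: ymono_def mmul_def mprod_def svar_def mpow_def Tmono_def tvar_def)

lemma length_zlist:
  assumes "0 < m" "0 < n"
  shows "length (zlist m n) = m * n"
proof -
  obtain a b where "m = Suc a" "n = Suc b" using assms not0_implies_Suc by blast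
  then show ?thesis by (simp add: zlist_def length_concat o_def sum_list_triv algebra_simps)
qed

lemma sorted_zlist_coordinate:
  assumes "w \<in> vars m n"
  shows "sorted (map (\<lambda>z. z w) (zlist m n))"
proof -
  have zlist_w: "map (\<lambda>z. z w) (zlist m n) = [0] @ map (\<lambda>i. xmono m n i w) [1..<m]
      @ map (\<lambda>j. ymono m n j w) [1..<n]
      @ concat (map (\<lambda>i. map (\<lambda>j. xmono m n i w + ymono m n j w) [1..<n]) [1..<m])"
    by (simp add: zlist_def map_concat o_def mmul_def mone_def)
  from assms consider (s) k where "w = S k" | (t) l where "w = Tv l" "1 \<le> l" "l \<le> n - 2"
    unfolding vars_def by auto
  then show ?thesis
    unfolding zlist_w
    by cases (rule sorted_grid_enumeration; auto simp: xmono_apply ymono_apply mono_on_def)+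
qed

lemma mono_on_zmono:
  assumes "0 < m" "0 < n" "w \<in> vars m n"
  shows "mono_on {1..m * n} (\<lambda>i. zmono m n i w)"
proof (rule mono_onI)
  fix i j assume "i \<in> {1..m * n}" "j \<in> {1..m * n}" "i \<le> j"
  then show "zmono m n i w \<le> zmono m n j w"
    using sorted_nth_mono[OF sorted_zlist_coordinate[OF assms(3)], of "i - 1" "j - 1"]
    by (simp add: zmono_def length_zlist[OF assms(1,2)])
qed

lemma antimono_on_partition_exponent:
  assumes "is_partition_upto N lam"
  shows "antimono_on {1..N} (\<lambda>k. lam k + N - k)"
proof (rule monotone_onI)
  fix i j assume "i \<in> {1..N}" "j \<in> {1..N}" "i \<le> j"
  moreover from this have "lam j \<le> lam i"
    using assms unfolding is_partition_upto_def by auto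
  ultimately show "lam j + N - j \<le> lam i + N - i" by simp
qed

lemma lvec_apply:
  "lvec m n lam \<sigma> w = (\<Sum>i=1..m * n. (lam (\<sigma> i) + m * n - \<sigma> i) * zmono m n i w)"
  by (simp add: lvec_def mprod_def mpow_def)

theorem mainTheorem14:
  fixes m n :: nat and \<sigma> lam :: "nat \<Rightarrow> nat"
  assumes "0 < m" and "0 < n"
    and "\<sigma> permutes {1..m*n}"
    and "is_partition_upto (m*n) lam"
  shows "succeq m n (lvec m n lam \<sigma>) (lvec m n lam id)"
  unfolding succeq_def lvec_apply
  using rearrangement_inequality[OF assms(3) antimono_on_partition_exponent[OF assms(4)]
      mono_on_zmono[OF assms(1,2)]]
  by simp

end
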